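(* Let $\mathcal F=(F,\rightarrowtail)$ be an argumentation framework and $A\subseteq F$. Then $A$ is strongly tenable if and only if $A$ is $1$-strongly tenable, i.e., Pro has a winning strategy starting with $X_0=A$ in the strong tenability game in which each move after $X_0$ introduces at most one new argument.
   Context: An argumentation framework (AF) $\mathcal F=(F,\rightarrowtail)$ consists of a (possibly infinite) set $F$ of arguments and a binary attack relation $\rightarrowtail\subseteq F\times F$. An argument $a$ attacks a set $B$ if $a\rightarrowtail b$ for some $b\in B$. $A^+=\{x\in F:\exists a\in A,\ a\rightarrowtail x\}$. A set is conflict-free if none of its elements attacks one of its elements. For $A,B\subseteq F$, $A$ is as cogent as $B$, written $A\succeq B$, if $A$ is conflict-free and every $b\in B$ that attacks $A$ belongs to $A^+$. Strong tenability game: a strong tenability dispute on $\mathcal F$ is a finite sequence $(X_0,\dots,X_n)$ of subsets of $F$, where even-indexed sets are moves of the Proponent (Pro) and odd-indexed sets are moves of the Opponent (Opp), such that (1) each $X_i$ is conflict-free; (2) $X_i\subseteq X_{i+2}$ whenever both are defined; (3) $X_1$ and each $X_{i+2}\setminus X_i$ are finite; (4) every Pro move $X_{2k}$ with $k\ge 1$ satisfies $X_{2k}\succeq X_{2k-1}$; (5) every Opp move $X_{2k+1}$ satisfies $X_{2k}\not\succeq X_{2k+1}$ (some element of $X_{2k+1}$ attacks $X_{2k}$ and is not in $X_{2k}^+$). Play starts with $X_0=A$ and players alternately extend the sequence so that it remains a dispute. A dispute is concluded if it has no legal extension; a concluded dispute is won by the player who made its last move. A strategy for Pro assigns to each dispute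 ending with an Opp move a legal Pro reply; it is winning if every concluded dispute starting with $X_0=A$ in which Pro follows it is won by Pro (infinite plays count as wins for Pro). $A$ is strongly tenable if Pro has a winning strategy starting with $X_0=A$. For $n\ge1$, the $n$-strong tenability game is the strong tenability game with the additional constraint that $|X_1|\le n$ and $|X_{i+2}\setminus X_i|\le n$ for every $i$ (each move except Pro's first introduces at most $n$ new arguments); $A$ is $n$-strongly tenable if Pro has a winning strategy starting with $X_0=A$ in this game. *)

theory Defs
  imports Main
begin

text \<open>An argumentation framework is given by a carrier set F of arguments and an
attack relation att (att a b means a attacks b), with att contained in F x F.\<close>

definition conflict_free :: "('a \<Rightarrow> 'a \<Rightarrow> bool) \<Rightarrow> 'a set \<Rightarrow> bool" where
  "conflict_free att S \<longleftrightarrow> \<not> (\<exists>a\<in>S. \<exists>b\<in>S. att a b)"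

definition attacked_by :: "('a \<Rightarrow> 'a \<Rightarrow> bool) \<Rightarrow> 'a set \<Rightarrow> 'a set" where
  "attacked_by att S = {x. \<exists>a\<in>S. att a x}"

definition cogent :: "('a \<Rightarrow> 'a \<Rightarrow> bool) \<Rightarrow> 'a set \<Rightarrow> 'a set \<Rightarrow> bool" where
  "cogent att A B \<longleftrightarrow> conflict_free att A \<and>
     (\<forall>b\<in>B. (\<exists>a\<in>A. att b a) \<longrightarrow> b \<in> attacked_by att A)"

text \<open>Disputes, as nonempty lists X_0, ..., X_n (index i = position in the list).
The bound bd = None gives the strong tenability game; bd = Some n gives the
n-strong tenability game.\<close>
definition dispute :: "'a set \<Rightarrow> ('a \<Rightarrow> 'a \<Rightarrow> bool) \<Rightarrow> nat option \<Rightarrow> 'a set list \<Rightarrow> bool" where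
  "dispute F att bd xs \<longleftrightarrow>
     xs \<noteq> [] \<and>
     (\<forall>i<length xs. xs ! i \<subseteq> F \<and> conflict_free att (xs ! i)) \<and>
     (\<forall>i. i + 2 < length xs \<longrightarrow> xs ! i \<subseteq> xs ! (i + 2)) \<and>
     (1 < length xs \<longrightarrow> finite (xs ! 1)) \<and>
     (\<forall>i. i + 2 < length xs \<longrightarrow> finite (xs ! (i + 2) - xs ! i)) \<and>
     (\<forall>k. 0 < k \<and> 2 * k < length xs \<longrightarrow> cogent att (xs ! (2 * k)) (xs ! (2 * k - 1))) \<and>
     (\<forall>k. 2 * k + 1 < length xs \<longrightarrow> \<not> cogent att (xs ! (2 * k)) (xs ! (2 * k + 1))) \<and>
     (\<forall>n. bd = Some n \<longrightarrow>
        (1 < length xs \<longrightarrow> card (xs ! 1) \<le> n) \<and>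
        (\<forall>i. i + 2 < length xs \<longrightarrow> card (xs ! (i + 2) - xs ! i) \<le> n))"

definition concluded :: "'a set \<Rightarrow> ('a \<Rightarrow> 'a \<Rightarrow> bool) \<Rightarrow> nat option \<Rightarrow> 'a set list \<Rightarrow> bool" where
  "concluded F att bd xs \<longleftrightarrow> dispute F att bd xs \<and> \<not> (\<exists>X. dispute F att bd (xs @ [X]))"

definition follows :: "('a set list \<Rightarrow> 'a set) \<Rightarrow> 'a set list \<Rightarrow> bool" where
  "follows \<sigma> xs \<longleftrightarrow> (\<forall>k. 0 < k \<and> 2 * k < length xs \<longrightarrow> xs ! (2 * k) = \<sigma> (take (2 * k) xs))"

text \<open>A winning strategy for Pro from A: it gives a legal reply to every dispute
starting with A, played according to it, and ending with an Opp move (even length);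
and every concluded such dispute is won by Pro (last move made by Pro, i.e. odd length).\<close>
definition winning_strategy ::
  "'a set \<Rightarrow> ('a \<Rightarrow> 'a \<Rightarrow> bool) \<Rightarrow> nat option \<Rightarrow> 'a set \<Rightarrow> ('a set list \<Rightarrow> 'a set) \<Rightarrow> bool" where
  "winning_strategy F att bd A \<sigma> \<longleftrightarrow>
     (\<forall>xs. dispute F att bd xs \<and> hd xs = A \<and> follows \<sigma> xs \<and> even (length xs)
            \<longrightarrow> dispute F att bd (xs @ [\<sigma> xs])) \<and>
     (\<forall>xs. concluded F att bd xs \<and> hd xs = A \<and> follows \<sigma> xs \<longrightarrow> odd (length xs))"

definition strongly_tenable :: "'a set \<Rightarrow> ('a \<Rightarrow> 'a \<Rightarrow> bool) \<Rightarrow> 'a set \<Rightarrow> bool" where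
  "strongly_tenable F att A \<longleftrightarrow> (\<exists>\<sigma>. winning_strategy F att None A \<sigma>)"

definition n_strongly_tenable :: "nat \<Rightarrow> 'a set \<Rightarrow> ('a \<Rightarrow> 'a \<Rightarrow> bool) \<Rightarrow> 'a set \<Rightarrow> bool" where
  "n_strongly_tenable n F att A \<longleftrightarrow> (\<exists>\<sigma>. winning_strategy F att (Some n) A \<sigma>)"

end

theory Submission
  imports Defs
begin

text \<open>Each game is simulated inside the other by a shadow play. From a winning strategy of the
unrestricted game Pro wins the 1-game: Opp's new argument b attacks Pro's set P and is not
attacked by it; if the shadow Pro set does not attack b yet, Opp's whole current set is played in
the shadow game, and the strategy's cogent reply must contain an attacker x of b, so Pro answers
with P \<union> {x}. Conversely, from a winning strategy of an n-game (n \<ge> 1) Pro wins the unrestricted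
game: against a finite Opp set Y, the arguments of Y that attack the shadow Pro set unanswered
are fed into the bounded game one at a time, and since Y is finite this stops with a shadow Pro
set cogent against Y, which becomes Pro's reply. Keeping the two plays in step is an invariant
on positions, and any invariant that Pro can always restore yields a winning strategy.\<close>

lemma conflict_free_subset: "conflict_free att Y \<Longrightarrow> X \<subseteq> Y \<Longrightarrow> conflict_free att X"
  unfolding conflict_free_def by blast

lemma cogentI: "conflict_free att X \<Longrightarrow> Y \<subseteq> attacked_by att X \<Longrightarrow> cogent att X Y"
  unfolding cogent_def by blast

lemma not_cogentE:
  assumes "\<not> cogent att X Y" and "conflict_free att X"
  obtains b a where "b \<in> Y" "a \<in> X" "att b a" "b \<notin> attacked_by att X"
  using assms unfolding cogent_def by blast

lemma odd_length_induct [consumes 1, case_names single snoc2]: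
  assumes "odd (length xs)"
    and single: "\<And>X. P [X]"
    and snoc2: "\<And>xs Y X. odd (length xs) \<Longrightarrow> P xs \<Longrightarrow> P (xs @ [Y, X])"
  shows "P xs"
  using assms(1)
proof (induction xs rule: length_induct)
  case (1 xs)
  show ?case
  proof (cases "length xs = 1")
    case True
    then obtain X where "xs = [X]" by (auto simp: length_Suc_conv)
    then show ?thesis by (simp add: single)
  next
    case False
    with "1.prems" have "2 \<le> length xs" by presburger
    then obtain zs X where xs: "xs = zs @ [X]" and "zs \<noteq> []"
      by (cases xs rule: rev_exhaust) (auto simp: Suc_le_eq)
    then obtain ys Y where zs: "zs = ys @ [Y]"
      by (cases zs rule: rev_exhaust) auto
    have "odd (length ys)" using "1.prems" xs zs by simp
    moreover have "P ys" using "1.IH" \<open>odd (length ys)\<close> xs zs by simp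
    ultimately show ?thesis using snoc2 xs zs by simp
  qed
qed

definition within_bound :: "nat option \<Rightarrow> 'a set \<Rightarrow> bool" where
  "within_bound bd S \<longleftrightarrow> (\<forall>n. bd = Some n \<longrightarrow> card S \<le> n)"

lemma within_bound_None [simp]: "within_bound None S"
  and within_bound_Some [simp]: "within_bound (Some n) S \<longleftrightarrow> card S \<le> n"
  by (simp_all add: within_bound_def)

definition legal_move_at ::
  "'a set \<Rightarrow> ('a \<Rightarrow> 'a \<Rightarrow> bool) \<Rightarrow> nat option \<Rightarrow> 'a set list \<Rightarrow> nat \<Rightarrow> bool" where
  "legal_move_at F att bd xs j \<longleftrightarrow>
     xs ! j \<subseteq> F \<and> conflict_free att (xs ! j) \<and>
     (j = 1 \<longrightarrow> finite (xs ! 1) \<and> within_bound bd (xs ! 1)) \<and>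
     (2 \<le> j \<longrightarrow> xs ! (j - 2) \<subseteq> xs ! j \<and> finite (xs ! j - xs ! (j - 2)) \<and>
                within_bound bd (xs ! j - xs ! (j - 2))) \<and>
     (even j \<and> 0 < j \<longrightarrow> cogent att (xs ! j) (xs ! (j - 1))) \<and>
     (odd j \<longrightarrow> \<not> cogent att (xs ! (j - 1)) (xs ! j))"

lemma all_add_2_less_iff:
  "(\<forall>i. i + 2 < (n::nat) \<longrightarrow> P i (i + 2)) \<longleftrightarrow> (\<forall>j<n. 2 \<le> j \<longrightarrow> P (j - 2) j)"
proof
  assume "\<forall>i. i + 2 < n \<longrightarrow> P i (i + 2)"
  then show "\<forall>j<n. 2 \<le> j \<longrightarrow> P (j - 2) j" by (metis le_add_diff_inverse2)
qed auto

lemma all_double_less_iff: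
  "(\<forall>k. 0 < k \<and> 2 * k < (n::nat) \<longrightarrow> P (2 * k)) \<longleftrightarrow> (\<forall>j<n. even j \<and> 0 < j \<longrightarrow> P j)"
proof
  assume "\<forall>k. 0 < k \<and> 2 * k < n \<longrightarrow> P (2 * k)"
  then show "\<forall>j<n. even j \<and> 0 < j \<longrightarrow> P j" by (auto elim!: evenE)
qed auto

lemma all_double_Suc_less_iff:
  "(\<forall>k. 2 * k + 1 < (n::nat) \<longrightarrow> P (2 * k) (2 * k + 1)) \<longleftrightarrow> (\<forall>j<n. odd j \<longrightarrow> P (j - 1) j)"
proof
  assume "\<forall>k. 2 * k + 1 < n \<longrightarrow> P (2 * k) (2 * k + 1)"
  then show "\<forall>j<n. odd j \<longrightarrow> P (j - 1) j" by (auto elim!: oddE)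
qed auto

lemma dispute_iff_legal_moves:
  "dispute F att bd xs \<longleftrightarrow> xs \<noteq> [] \<and> (\<forall>j<length xs. legal_move_at F att bd xs j)"
  unfolding dispute_def legal_move_at_def within_bound_def
    all_add_2_less_iff[where P = "\<lambda>i j. xs ! i \<subseteq> xs ! j"]
    all_add_2_less_iff[where P = "\<lambda>i j. finite (xs ! j - xs ! i)"]
    all_add_2_less_iff[where P = "\<lambda>i j. card (xs ! j - xs ! i) \<le> n" for n]
    all_double_less_iff[where P = "\<lambda>j. cogent att (xs ! j) (xs ! (j - 1))"]
    all_double_Suc_less_iff[where P = "\<lambda>i j. \<not> cogent att (xs ! i) (xs ! j)"]
  by auto

lemma legal_move_at_append:
  "j < length xs \<Longrightarrow> legal_move_at F att bd (xs @ ys) j \<longleftrightarrow> legal_move_at F att bd xs j"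
  by (simp add: legal_move_at_def nth_append less_imp_diff_less)

lemma dispute_snoc:
  "xs \<noteq> [] \<Longrightarrow>
    dispute F att bd (xs @ [X]) \<longleftrightarrow> dispute F att bd xs \<and> legal_move_at F att bd (xs @ [X]) (length xs)"
  by (auto simp: dispute_iff_legal_moves All_less_Suc legal_move_at_append)

lemma dispute_single: "dispute F att bd [X] \<longleftrightarrow> X \<subseteq> F \<and> conflict_free att X"
  by (simp add: dispute_iff_legal_moves legal_move_at_def)

lemma dispute_prefix:
  assumes "dispute F att bd (xs @ ys)" and "xs \<noteq> []"
  shows "dispute F att bd xs"
  unfolding dispute_iff_legal_moves
proof (intro conjI allI impI)
  fix j assume "j < length xs"
  with assms(1) have "legal_move_at F att bd (xs @ ys) j" by (simp add: dispute_iff_legal_moves)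
  with \<open>j < length xs\<close> show "legal_move_at F att bd xs j" by (simp add: legal_move_at_append)
qed (rule assms(2))

lemma dispute_last: "dispute F att bd xs \<Longrightarrow> last xs \<subseteq> F \<and> conflict_free att (last xs)"
  by (auto simp: dispute_iff_legal_moves legal_move_at_def last_conv_nth)

definition last_opp :: "'a set list \<Rightarrow> 'a set" where
  "last_opp xs = (if 3 \<le> length xs then xs ! (length xs - 2) else {})"

lemma last_opp_single [simp]: "last_opp [X] = {}"
  by (simp add: last_opp_def)

lemma last_opp_snoc2 [simp]: "xs \<noteq> [] \<Longrightarrow> last_opp (xs @ [Y, X]) = Y"
  by (cases xs) (auto simp: last_opp_def nth_append)

lemma dispute_snoc_opp:
  assumes "dispute F att bd xs" and "odd (length xs)"
  shows "dispute F att bd (xs @ [Y]) \<longleftrightarrow> Y \<subseteq> F \<and> conflict_free att Y \<and> last_opp xs \<subseteq> Y \<and>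
    finite (Y - last_opp xs) \<and> within_bound bd (Y - last_opp xs) \<and> \<not> cogent att (last xs) Y"
proof -
  have "xs \<noteq> []" using assms(1) by (simp add: dispute_iff_legal_moves)
  then have "dispute F att bd (xs @ [Y]) \<longleftrightarrow> legal_move_at F att bd (xs @ [Y]) (length xs)"
    using assms(1) dispute_snoc by blast
  also have "\<dots> \<longleftrightarrow> Y \<subseteq> F \<and> conflict_free att Y \<and> last_opp xs \<subseteq> Y \<and>
    finite (Y - last_opp xs) \<and> within_bound bd (Y - last_opp xs) \<and> \<not> cogent att (last xs) Y"
  proof -
    have "length xs = 1 \<or> 3 \<le> length xs" using assms(2) by presburger
    then show ?thesis
      using assms(2) \<open>xs \<noteq> []\<close>
      by (elim disjE) (auto simp: legal_move_at_def last_opp_def nth_append last_conv_nth)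
  qed
  finally show ?thesis .
qed

lemma dispute_snoc_pro:
  assumes "dispute F att bd (xs @ [Y])" and "odd (length xs)"
  shows "dispute F att bd (xs @ [Y, X]) \<longleftrightarrow> X \<subseteq> F \<and> conflict_free att X \<and> last xs \<subseteq> X \<and>
    finite (X - last xs) \<and> within_bound bd (X - last xs) \<and> cogent att X Y"
proof -
  have "xs \<noteq> []" using assms(2) by auto
  have "dispute F att bd ((xs @ [Y]) @ [X]) \<longleftrightarrow> legal_move_at F att bd (xs @ [Y, X]) (Suc (length xs))"
    using assms(1) dispute_snoc[of "xs @ [Y]"] by auto
  also have "\<dots> \<longleftrightarrow> X \<subseteq> F \<and> conflict_free att X \<and> last xs \<subseteq> X \<and>
    finite (X - last xs) \<and> within_bound bd (X - last xs) \<and> cogent att X Y"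
    using assms(2) \<open>xs \<noteq> []\<close> by (auto simp: legal_move_at_def nth_append last_conv_nth Suc_le_eq)
  finally show ?thesis by simp
qed

lemma follows_iff: "follows \<sigma> xs \<longleftrightarrow> (\<forall>j<length xs. even j \<and> 0 < j \<longrightarrow> xs ! j = \<sigma> (take j xs))"
  unfolding follows_def by (rule all_double_less_iff[where P = "\<lambda>j. xs ! j = \<sigma> (take j xs)"])

lemma follows_snoc:
  "follows \<sigma> (xs @ [X]) \<longleftrightarrow> follows \<sigma> xs \<and> (even (length xs) \<and> xs \<noteq> [] \<longrightarrow> X = \<sigma> xs)"
  by (auto simp: follows_iff All_less_Suc nth_append)

lemma follows_single: "follows \<sigma> [X]"
  by (simp add: follows_iff)

lemma finite_last_opp:
  assumes "dispute F att bd xs" and "odd (length xs)"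
  shows "finite (last_opp xs)"
  using assms(2,1)
proof (induction xs rule: odd_length_induct)
  case (snoc2 xs Y X)
  have "xs \<noteq> []" using snoc2.hyps by auto
  have "dispute F att bd (xs @ [Y])"
    using snoc2.prems dispute_prefix[of F att bd "xs @ [Y]" "[X]"] by simp
  moreover have "dispute F att bd xs" using calculation \<open>xs \<noteq> []\<close> dispute_prefix by blast
  ultimately have "finite (Y - last_opp xs)" and "finite (last_opp xs)"
    using snoc2.hyps snoc2.IH dispute_snoc_opp[of F att bd xs Y] by auto
  with \<open>xs \<noteq> []\<close> show ?case by simp
qed simp

lemma cogent_last_last_opp:
  assumes "dispute F att bd xs" and "odd (length xs)"
  shows "cogent att (last xs) (last_opp xs)"
  using assms(2,1)
proof (induction xs rule: odd_length_induct)
  case (single X)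
  then show ?case by (simp add: dispute_single cogent_def)
next
  case (snoc2 xs Y X)
  have "xs \<noteq> []" using snoc2.hyps by auto
  have "dispute F att bd (xs @ [Y])" using snoc2.prems dispute_prefix[of F att bd "xs @ [Y]" "[X]"] by simp
  with \<open>xs \<noteq> []\<close> snoc2 show ?case using dispute_snoc_pro[of F att bd xs Y X] by auto
qed

definition strategy_position ::
  "'a set \<Rightarrow> ('a \<Rightarrow> 'a \<Rightarrow> bool) \<Rightarrow> nat option \<Rightarrow> 'a set \<Rightarrow> ('a set list \<Rightarrow> 'a set) \<Rightarrow> 'a set list \<Rightarrow> bool" where
  "strategy_position F att bd A \<sigma> xs \<longleftrightarrow>
     dispute F att bd xs \<and> hd xs = A \<and> follows \<sigma> xs \<and> odd (length xs)"

lemma strategy_position_last: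
  "strategy_position F att bd A \<sigma> xs \<Longrightarrow> last xs \<subseteq> F \<and> conflict_free att (last xs)"
  unfolding strategy_position_def using dispute_last by blast

lemma strategy_position_single: "dispute F att bd [A] \<Longrightarrow> strategy_position F att bd A \<sigma> [A]"
  by (simp add: strategy_position_def follows_single)

lemma strategy_position_snoc2:
  "xs \<noteq> [] \<Longrightarrow> strategy_position F att bd A \<sigma> (xs @ [Y, X]) \<longleftrightarrow>
    strategy_position F att bd A \<sigma> xs \<and> dispute F att bd (xs @ [Y, X]) \<and> X = \<sigma> (xs @ [Y])"
  using follows_snoc[of \<sigma> "xs @ [Y]" X] follows_snoc[of \<sigma> xs Y] dispute_prefix[of F att bd xs "[Y, X]"]
  by (auto simp: strategy_position_def)

lemma strategy_position_step:
  assumes "winning_strategy F att bd A \<sigma>" and "strategy_position F att bd A \<sigma> xs"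
    and "dispute F att bd (xs @ [Y])"
  shows "strategy_position F att bd A \<sigma> (xs @ [Y, \<sigma> (xs @ [Y])])"
proof -
  have "xs \<noteq> []" using assms(2) by (auto simp: strategy_position_def)
  moreover have "hd (xs @ [Y]) = A" "follows \<sigma> (xs @ [Y])" "even (length (xs @ [Y]))"
    using assms(2) \<open>xs \<noteq> []\<close> by (simp_all add: strategy_position_def follows_snoc)
  ultimately have "dispute F att bd ((xs @ [Y]) @ [\<sigma> (xs @ [Y])])"
    using assms(1,3) unfolding winning_strategy_def by blast
  with assms(2) \<open>xs \<noteq> []\<close> show ?thesis by (simp add: strategy_position_snoc2)
qed

lemma winning_strategy_from_invariant:
  assumes init: "dispute F att bd [A] \<Longrightarrow> Inv [A]"
    and step: "\<And>xs Y. Inv xs \<Longrightarrow> dispute F att bd xs \<Longrightarrow> odd (length xs) \<Longrightarrow>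
      dispute F att bd (xs @ [Y]) \<Longrightarrow> \<exists>X. dispute F att bd (xs @ [Y, X]) \<and> Inv (xs @ [Y, X])"
  shows "\<exists>\<sigma>. winning_strategy F att bd A \<sigma>"
proof -
  define \<sigma> where "\<sigma> ys = (SOME X. dispute F att bd (ys @ [X]) \<and> Inv (ys @ [X]))" for ys
  have reply: "dispute F att bd (xs @ [Y, \<sigma> (xs @ [Y])]) \<and> Inv (xs @ [Y, \<sigma> (xs @ [Y])])"
    if "Inv xs" "dispute F att bd xs" "odd (length xs)" "dispute F att bd (xs @ [Y])" for xs Y
    using someI_ex[OF step[OF that]] unfolding \<sigma>_def by simp
  have inv: "Inv xs" if "strategy_position F att bd A \<sigma> xs" for xs
  proof -
    have "odd (length xs)" using that by (simp add: strategy_position_def)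
    then show ?thesis using that
    proof (induction xs rule: odd_length_induct)
      case (single X)
      then show ?case by (auto simp: strategy_position_def intro: init)
    next
      case (snoc2 xs Y X)
      have "xs \<noteq> []" using snoc2.hyps by auto
      with snoc2.prems have "strategy_position F att bd A \<sigma> xs" "X = \<sigma> (xs @ [Y])"
        and "dispute F att bd (xs @ [Y, X])" by (auto simp: strategy_position_snoc2)
      moreover have "dispute F att bd (xs @ [Y])"
        using calculation(3) dispute_prefix[of F att bd "xs @ [Y]" "[X]"] by simp
      moreover have "Inv xs" using snoc2.IH calculation(1) by blast
      ultimately show ?case using reply[of xs Y] by (simp add: strategy_position_def)
    qed
  qed
  have legal: "dispute F att bd (xs @ [\<sigma> xs])"
    if play: "dispute F att bd xs" "hd xs = A" "follows \<sigma> xs" "even (length xs)" for xs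
  proof -
    have "xs \<noteq> []" using play(1) by (simp add: dispute_iff_legal_moves)
    then obtain ys Y where xs: "xs = ys @ [Y]" by (cases xs rule: rev_exhaust) auto
    with play(4) have "ys \<noteq> []" by auto
    with xs have "strategy_position F att bd A \<sigma> ys"
      using play dispute_prefix by (auto simp: strategy_position_def follows_snoc)
    then show ?thesis using reply inv play(1) xs by (auto simp: strategy_position_def)
  qed
  then have "winning_strategy F att bd A \<sigma>"
    unfolding winning_strategy_def concluded_def by blast
  then show ?thesis by blast
qed

lemma strategy_counterattacks:
  assumes \<sigma>: "winning_strategy F att None A \<sigma>"
    and ys: "strategy_position F att None A \<sigma> ys"
    and Y: "Y \<subseteq> F" "conflict_free att Y" "finite Y" "last_opp ys \<subseteq> Y"
    and b: "b \<in> Y" "att b a" "a \<in> last ys"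
  obtains ys' where "strategy_position F att None A \<sigma> ys'" "last ys \<subseteq> last ys'"
    "last_opp ys' \<subseteq> Y" "b \<in> attacked_by att (last ys')"
proof (cases "b \<in> attacked_by att (last ys)")
  case True
  with ys Y(4) show ?thesis using that[of ys] by blast
next
  case False
  with b have "\<not> cogent att (last ys) Y" unfolding cogent_def by blast
  with ys Y have "dispute F att None (ys @ [Y])"
    by (simp add: strategy_position_def dispute_snoc_opp)
  define X where "X = \<sigma> (ys @ [Y])"
  have pos: "strategy_position F att None A \<sigma> (ys @ [Y, X])"
    unfolding X_def using \<sigma> ys \<open>dispute F att None (ys @ [Y])\<close> by (rule strategy_position_step)
  have "ys \<noteq> []" "odd (length ys)" using ys by (auto simp: strategy_position_def)
  with pos \<open>dispute F att None (ys @ [Y])\<close> have "last ys \<subseteq> X" "cogent att X Y"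
    by (simp_all add: strategy_position_def dispute_snoc_pro)
  with b have "b \<in> attacked_by att X" unfolding cogent_def by blast
  with pos \<open>last ys \<subseteq> X\<close> \<open>ys \<noteq> []\<close> show ?thesis using that[of "ys @ [Y, X]"] by simp
qed

lemma one_bounded_reply:
  assumes \<sigma>: "winning_strategy F att None A \<sigma>"
    and ys: "strategy_position F att None A \<sigma> ys" "last xs \<subseteq> last ys" "last_opp ys \<subseteq> last_opp xs"
    and attacked: "last_opp xs \<subseteq> attacked_by att (last xs)"
    and xs: "dispute F att (Some 1) xs" "odd (length xs)"
    and Y: "dispute F att (Some 1) (xs @ [Y])"
  obtains X ys' where "dispute F att (Some 1) (xs @ [Y, X])" "Y \<subseteq> attacked_by att X"
    "strategy_position F att None A \<sigma> ys'" "X \<subseteq> last ys'" "last_opp ys' \<subseteq> Y"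
proof -
  have Y_move: "Y \<subseteq> F" "conflict_free att Y" "last_opp xs \<subseteq> Y" "finite (Y - last_opp xs)"
    "card (Y - last_opp xs) \<le> 1" "\<not> cogent att (last xs) Y"
    using Y xs by (simp_all add: dispute_snoc_opp)
  then obtain b a where b: "b \<in> Y" "a \<in> last xs" "att b a" "b \<notin> attacked_by att (last xs)"
    using dispute_last[OF xs(1)] by (auto elim: not_cogentE)
  have "Y - last_opp xs = {b}"
    using Y_move(4,5) b(1,4) attacked by (auto simp: card_le_Suc0_iff_eq)
  then have Y_eq: "Y = insert b (last_opp xs)" using Y_move(3) by blast
  have "finite Y" using Y_eq finite_last_opp[OF xs] by simp
  then obtain ys' where ys': "strategy_position F att None A \<sigma> ys'" "last ys \<subseteq> last ys'"
    "last_opp ys' \<subseteq> Y" "b \<in> attacked_by att (last ys')"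
    using strategy_counterattacks[OF \<sigma> ys(1) Y_move(1,2)] ys(2,3) Y_move(3) b by blast
  then obtain x where x: "x \<in> last ys'" "att x b" unfolding attacked_by_def by blast
  define X where "X = insert x (last xs)"
  have "X \<subseteq> last ys'" using x(1) ys(2) ys'(2) unfolding X_def by blast
  have "Y \<subseteq> attacked_by att X"
    using Y_eq x(2) attacked unfolding X_def attacked_by_def by auto
  moreover have "conflict_free att X"
    using strategy_position_last[OF ys'(1)] \<open>X \<subseteq> last ys'\<close> conflict_free_subset by blast
  moreover have "X \<subseteq> F" using strategy_position_last[OF ys'(1)] \<open>X \<subseteq> last ys'\<close> by blast
  ultimately have "dispute F att (Some 1) (xs @ [Y, X])"
    using Y xs(2) by (auto simp: dispute_snoc_pro cogentI X_def insert_Diff_if)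
  with \<open>Y \<subseteq> attacked_by att X\<close> ys'(1,3) \<open>X \<subseteq> last ys'\<close> show ?thesis using that by blast
qed

lemma strongly_tenable_imp_1_strongly_tenable:
  assumes "strongly_tenable F att A"
  shows "n_strongly_tenable 1 F att A"
proof -
  obtain \<sigma> where \<sigma>: "winning_strategy F att None A \<sigma>"
    using assms by (auto simp: strongly_tenable_def)
  \<comment> \<open>Pro's set attacks every argument Opp has played, so each Opp move needs a single answer\<close>
  let ?Inv = "\<lambda>xs. (\<exists>ys. strategy_position F att None A \<sigma> ys \<and> last xs \<subseteq> last ys \<and>
    last_opp ys \<subseteq> last_opp xs) \<and> last_opp xs \<subseteq> attacked_by att (last xs)"
  have "\<exists>\<tau>. winning_strategy F att (Some 1) A \<tau>"
  proof (rule winning_strategy_from_invariant[where Inv = ?Inv])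
    assume "dispute F att (Some 1) [A]"
    then show "?Inv [A]" using strategy_position_single[of F att None A \<sigma>]
      by (auto simp: dispute_single)
  next
    fix xs Y
    assume "?Inv xs" and "dispute F att (Some 1) xs" "odd (length xs)"
      and "dispute F att (Some 1) (xs @ [Y])"
    then obtain X ys' where "dispute F att (Some 1) (xs @ [Y, X])" "Y \<subseteq> attacked_by att X"
      "strategy_position F att None A \<sigma> ys'" "X \<subseteq> last ys'" "last_opp ys' \<subseteq> Y"
      using one_bounded_reply[OF \<sigma>] by metis
    moreover have "xs \<noteq> []" using \<open>odd (length xs)\<close> by auto
    ultimately show "\<exists>X. dispute F att (Some 1) (xs @ [Y, X]) \<and> ?Inv (xs @ [Y, X])" by auto
  qed
  then show ?thesis by (simp add: n_strongly_tenable_def)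
qed

lemma bounded_strategy_becomes_cogent:
  assumes \<tau>: "winning_strategy F att (Some (Suc n)) A \<tau>"
    and ys: "strategy_position F att (Some (Suc n)) A \<tau> ys"
    and Y: "Y \<subseteq> F" "conflict_free att Y" "finite Y" "last_opp ys \<subseteq> Y"
  shows "\<exists>ys'. strategy_position F att (Some (Suc n)) A \<tau> ys' \<and> last ys \<subseteq> last ys' \<and>
    finite (last ys' - last ys) \<and> last_opp ys' \<subseteq> Y \<and> cogent att (last ys') Y"
  using ys Y(4)
proof (induction "card (Y - last_opp ys)" arbitrary: ys rule: less_induct)
  case less
  show ?case
  proof (cases "cogent att (last ys) Y")
    case True
    with less.prems show ?thesis by auto
  next
    case False
    then obtain d a where d: "d \<in> Y" "a \<in> last ys" "att d a" "d \<notin> attacked_by att (last ys)"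
      using strategy_position_last[OF less.prems(1)] by (auto elim: not_cogentE)
    have ys_play: "ys \<noteq> []" "odd (length ys)" "dispute F att (Some (Suc n)) ys"
      using less.prems(1) by (auto simp: strategy_position_def)
    have "d \<notin> last_opp ys"
      using cogent_last_last_opp[OF ys_play(3,2)] d(2-4) unfolding cogent_def by blast
    define Z where "Z = insert d (last_opp ys)"
    have "Z \<subseteq> Y" using d(1) less.prems(2) unfolding Z_def by blast
    have "dispute F att (Some (Suc n)) (ys @ [Z])"
      using ys_play(2,3) \<open>Z \<subseteq> Y\<close> Y(1,2) d \<open>d \<notin> last_opp ys\<close> conflict_free_subset[of att Y Z]
      by (auto simp: dispute_snoc_opp Z_def cogent_def insert_Diff_if)
    define X where "X = \<tau> (ys @ [Z])"
    have pos: "strategy_position F att (Some (Suc n)) A \<tau> (ys @ [Z, X])"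
      unfolding X_def using \<tau> less.prems(1) \<open>dispute F att (Some (Suc n)) (ys @ [Z])\<close>
      by (rule strategy_position_step)
    then have X: "last ys \<subseteq> X" "finite (X - last ys)"
      using ys_play \<open>dispute F att (Some (Suc n)) (ys @ [Z])\<close>
      by (simp_all add: strategy_position_def dispute_snoc_pro)
    have "Y - Z \<subset> Y - last_opp ys" using d(1) \<open>d \<notin> last_opp ys\<close> unfolding Z_def by blast
    then have "card (Y - Z) < card (Y - last_opp ys)" using Y(3) by (simp add: psubset_card_mono)
    then obtain ys' where ys': "strategy_position F att (Some (Suc n)) A \<tau> ys'" "X \<subseteq> last ys'"
      "finite (last ys' - X)" "last_opp ys' \<subseteq> Y" "cogent att (last ys') Y"
      using less.hyps[of "ys @ [Z, X]"] pos \<open>Z \<subseteq> Y\<close> ys_play(1) by auto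
    have "last ys' - last ys \<subseteq> (last ys' - X) \<union> (X - last ys)" by blast
    then have "finite (last ys' - last ys)" using X(2) ys'(3) finite_subset by blast
    with ys' X(1) show ?thesis by blast
  qed
qed

lemma n_strongly_tenable_imp_strongly_tenable:
  assumes "n_strongly_tenable (Suc n) F att A"
  shows "strongly_tenable F att A"
proof -
  obtain \<tau> where \<tau>: "winning_strategy F att (Some (Suc n)) A \<tau>"
    using assms by (auto simp: n_strongly_tenable_def)
  let ?Inv = "\<lambda>xs. \<exists>ys. strategy_position F att (Some (Suc n)) A \<tau> ys \<and> last ys = last xs \<and>
    last_opp ys \<subseteq> last_opp xs"
  have "\<exists>\<sigma>. winning_strategy F att None A \<sigma>"
  proof (rule winning_strategy_from_invariant[where Inv = ?Inv])
    assume "dispute F att None [A]"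
    then show "?Inv [A]" using strategy_position_single[of F att "Some (Suc n)" A \<tau>]
      by (auto simp: dispute_single)
  next
    fix xs Y
    assume "?Inv xs" and xs: "dispute F att None xs" "odd (length xs)"
      and Y: "dispute F att None (xs @ [Y])"
    then obtain ys where ys: "strategy_position F att (Some (Suc n)) A \<tau> ys" "last ys = last xs"
      "last_opp ys \<subseteq> last_opp xs" by blast
    have Y_move: "Y \<subseteq> F" "conflict_free att Y" "last_opp xs \<subseteq> Y" "finite (Y - last_opp xs)"
      using Y xs by (simp_all add: dispute_snoc_opp)
    then have "finite Y" using finite_last_opp[OF xs] by (simp add: finite_Diff2)
    then obtain ys' where ys': "strategy_position F att (Some (Suc n)) A \<tau> ys'" "last ys \<subseteq> last ys'"
      "finite (last ys' - last ys)" "last_opp ys' \<subseteq> Y" "cogent att (last ys') Y"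
      using bounded_strategy_becomes_cogent[OF \<tau> ys(1) Y_move(1,2)] ys(3) Y_move(3) by blast
    then have "dispute F att None (xs @ [Y, last ys'])"
      using Y xs(2) ys(2) strategy_position_last[OF ys'(1)] by (simp add: dispute_snoc_pro)
    moreover have "xs \<noteq> []" using xs(2) by auto
    ultimately show "\<exists>X. dispute F att None (xs @ [Y, X]) \<and> ?Inv (xs @ [Y, X])"
      using ys'(1,4) by auto
  qed
  then show ?thesis by (simp add: strongly_tenable_def)
qed

theorem theorem5:
  fixes F :: "'a set" and att :: "'a \<Rightarrow> 'a \<Rightarrow> bool" and A :: "'a set"
  assumes "\<forall>x y. att x y \<longrightarrow> x \<in> F \<and> y \<in> F"
    and "A \<subseteq> F"
  shows "strongly_tenable F att A \<longleftrightarrow> n_strongly_tenable 1 F att A"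
  using strongly_tenable_imp_1_strongly_tenable n_strongly_tenable_imp_strongly_tenable[of 0]
  by auto

end
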